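(* Let $0<c<1$, $\beta_1,\dots,\beta_p>0$ with $\beta_i-\beta_j\notin\mathbb Z$ for $i\ne j$, $\vec n\in\mathbb N_0^p$, and $i\in\{1,\dots,p\}$ with $n_i\ge1$. The type I multiple Meixner polynomials of the second kind are $$M^{(i)}_{2:\vec n}(x;\vec\beta,c)=\frac{(-1)^{|\vec n|-1}(1-c)^{\beta_i+|\vec n|-1}}{c^{|\vec n|-1}(n_i-1)!\prod_{k\ne i}(\beta_k-\beta_i)_{n_k}}\;{}_{p+1}F_p\!\left(\begin{matrix}-n_i+1,\ \{\beta_i+1-\beta_k-n_k\}_{k\ne i},\ x+\beta_i\\ \{\beta_i+1-\beta_k\}_{k\ne i},\ \beta_i\end{matrix};1-c\right).$$
   Context: $(a)_m$ is the Pochhammer symbol; ${}_{p+1}F_p(a_1,\dots,a_{p+1};b_1,\dots,b_p;z)=\sum_{l\ge0}\frac{\prod(a_r)_l}{\prod(b_r)_l}\frac{z^l}{l!}$ (here terminating). Weights $w_i(x)=\frac{\Gamma(\beta_i+x)}{\Gamma(\beta_i)\Gamma(x+1)}c^x$ on $\mathbb N_0$. The type I polynomials $A^{(1)},\dots,A^{(p)}$ for $\vec n$ satisfy $\deg A^{(i)}\le n_i-1$ (zero if $n_i=0$) and $\sum_{i=1}^p\sum_{k\ge0}k^jA^{(i)}(k)w_i(k)=0$ for $0\le j\le|\vec n|-2$, $=1$ for $j=|\vec n|-1$; they exist and are unique. *)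

theory Defs
  imports "HOL-Analysis.Analysis" "HOL-Computational_Algebra.Polynomial"
begin

definition mindex_size :: "nat \<Rightarrow> (nat \<Rightarrow> nat) \<Rightarrow> nat" where
  "mindex_size p n = (\<Sum>k\<in>{1..p}. n k)"

definition meixner_weight :: "real \<Rightarrow> real \<Rightarrow> nat \<Rightarrow> real" where
  "meixner_weight b c x = Gamma (b + real x) / (Gamma b * Gamma (real x + 1)) * c ^ x"

definition is_typeI :: "nat \<Rightarrow> (nat \<Rightarrow> real) \<Rightarrow> real \<Rightarrow> (nat \<Rightarrow> nat) \<Rightarrow> (nat \<Rightarrow> real poly) \<Rightarrow> bool" where
  "is_typeI p \<beta> c n A \<longleftrightarrow>
     (\<forall>i\<in>{1..p}. (n i = 0 \<longrightarrow> A i = 0) \<and> (0 < n i \<longrightarrow> degree (A i) \<le> n i - 1)) \<and>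
     (\<forall>j < mindex_size p n.
        (\<Sum>i\<in>{1..p}. \<Sum>k. real k ^ j * poly (A i) (real k) * meixner_weight (\<beta> i) c k)
          = (if j = mindex_size p n - 1 then 1 else 0))"

definition hypergeomF :: "real list \<Rightarrow> real list \<Rightarrow> real \<Rightarrow> real" where
  "hypergeomF as bs z =
     (\<Sum>l. (\<Prod>a\<leftarrow>as. pochhammer a l) / (\<Prod>b\<leftarrow>bs. pochhammer b l) * z ^ l / fact l)"

definition meixner2_typeI :: "nat \<Rightarrow> (nat \<Rightarrow> real) \<Rightarrow> real \<Rightarrow> (nat \<Rightarrow> nat) \<Rightarrow> nat \<Rightarrow> real \<Rightarrow> real" where
  "meixner2_typeI p \<beta> c n i x =
     (let N = mindex_size p n; ks = filter (\<lambda>k. k \<noteq> i) [1..<p+1] in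
      (-1) ^ (N - 1) * (1 - c) powr (\<beta> i + real N - 1)
      / (c ^ (N - 1) * fact (n i - 1) * (\<Prod>k\<in>{1..p} - {i}. pochhammer (\<beta> k - \<beta> i) (n k)))
      * hypergeomF
          ([1 - real (n i)] @ map (\<lambda>k. \<beta> i + 1 - \<beta> k - real (n k)) ks @ [x + \<beta> i])
          (map (\<lambda>k. \<beta> i + 1 - \<beta> k) ks @ [\<beta> i])
          (1 - c))"

end

(*
  Expand each A k in the rising factorials (x + \<beta> k)_r, r < n k.  The negative binomial series
  evaluates the moments of falling factorials against these basis polynomials in closed form, so
  the type I conditions become, for the rescaled coefficients d k r, the Vandermonde-type system
  \<Sum>(k,r) d k r * (\<beta> k + r)_j = \<delta>(j, |n| - 1) * ((1 - c) / c)^(|n| - 1),  j < |n|,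
  at the |n| nodes \<beta> k + r.  Testing it against the polynomial that vanishes at all nodes but one
  (Lagrange interpolation) gives d k r times the product of the differences to the other nodes,
  and evaluating that product by Pochhammer symbols yields exactly the coefficients of the
  terminating hypergeometric series.
*)
theory Submission
  imports Defs
begin

section \<open>Rising and falling factorial polynomials\<close>

definition rising_poly :: "'a::comm_ring_1 \<Rightarrow> nat \<Rightarrow> 'a poly" where
  "rising_poly b r = (\<Prod>m<r. [:b + of_nat m, 1:])"

definition falling_poly :: "nat \<Rightarrow> 'a::comm_ring_1 poly" where
  "falling_poly j = (\<Prod>m<j. [:- of_nat m, 1:])"

lemma
  fixes f :: "nat \<Rightarrow> 'a::idom"
  shows degree_prod_monic_linear: "degree (\<Prod>m<j. [:f m, 1:]) = j"
    and lead_coeff_prod_monic_linear: "lead_coeff (\<Prod>m<j. [:f m, 1:]) = 1"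
proof -
  show deg: "degree (\<Prod>m<j. [:f m, 1:]) = j"
    by (simp add: degree_prod_eq_sum_degree)
  show "lead_coeff (\<Prod>m<j. [:f m, 1:]) = 1"
    using lead_coeff_prod[of "\<lambda>m. [:f m, 1:]" "{..<j}"] by (simp add: deg)
qed

lemma degree_rising_poly [simp]: "degree (rising_poly (b::'a::idom) r) = r"
  and coeff_rising_poly_degree [simp]: "coeff (rising_poly (b::'a::idom) r) r = 1"
  using degree_prod_monic_linear lead_coeff_prod_monic_linear by (metis rising_poly_def)+

lemma degree_falling_poly [simp]: "degree (falling_poly j :: 'a::idom poly) = j"
  and coeff_falling_poly_degree [simp]: "coeff (falling_poly j :: 'a::idom poly) j = 1"
  using degree_prod_monic_linear lead_coeff_prod_monic_linear by (metis falling_poly_def)+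

lemma poly_rising_poly: "poly (rising_poly b r) x = pochhammer (x + b) r"
  by (simp add: rising_poly_def poly_prod pochhammer_prod atLeast0LessThan algebra_simps)

lemma poly_falling_poly_of_nat:
  "poly (falling_poly j) (of_nat (m + j)) * fact m = (fact (m + j) :: 'a::{comm_ring_1,ring_char_0})"
proof (induction j arbitrary: m)
  case (Suc j)
  have "poly (falling_poly (Suc j)) (of_nat (m + Suc j)) * fact m
        = poly (falling_poly j) (of_nat (Suc m + j)) * ((of_nat m + 1) * fact m :: 'a)"
    by (simp add: falling_poly_def algebra_simps)
  also have "\<dots> = fact (Suc m + j)" using Suc.IH[of "Suc m"] by (simp add: algebra_simps)
  finally show ?case by simp
qed (simp add: falling_poly_def)

lemma poly_falling_poly_less: "k < j \<Longrightarrow> poly (falling_poly j) (of_nat k :: 'a::comm_ring_1) = 0"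
  unfolding falling_poly_def poly_prod by (rule prod_zero) (auto intro!: bexI[of _ k])

lemma monic_basis_expansion:
  fixes P :: "nat \<Rightarrow> 'a::field poly"
  assumes "\<And>j. degree (P j) = j" "\<And>j. lead_coeff (P j) = 1" and "degree q \<le> N"
  shows "\<exists>\<alpha>. q = (\<Sum>j\<le>N. smult (\<alpha> j) (P j)) \<and> \<alpha> N = coeff q N"
  using assms(3)
proof (induction N arbitrary: q)
  case 0
  have "P 0 = 1" using assms(1,2)[of 0] by (metis degree_0_id one_pCons)
  moreover have "q = [:coeff q 0:]" using 0 by (metis degree_0_id le_zero_eq)
  ultimately show ?case by (intro exI[of _ "\<lambda>_. coeff q 0"]) auto
next
  case (Suc N)
  define q' where "q' = q - smult (coeff q (Suc N)) (P (Suc N))"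
  have "degree q' \<le> Suc N" unfolding q'_def using Suc.prems assms(1)
    by (metis degree_diff_le degree_smult_le le_trans)
  moreover have "coeff q' (Suc N) = 0" unfolding q'_def using assms(1,2) by simp
  ultimately have "degree q' \<le> N"
    by (metis degree_0 le0 le_Suc_eq leading_coeff_0_iff)
  then obtain \<alpha> where \<alpha>: "q' = (\<Sum>j\<le>N. smult (\<alpha> j) (P j))" using Suc.IH by blast
  define \<alpha>' where "\<alpha>' = \<alpha>(Suc N := coeff q (Suc N))"
  have "(\<Sum>j\<le>N. smult (\<alpha>' j) (P j)) = q'"
    unfolding \<alpha> by (intro sum.cong) (auto simp: \<alpha>'_def)
  then have "q = (\<Sum>j\<le>Suc N. smult (\<alpha>' j) (P j))"
    by (simp add: q'_def \<alpha>'_def)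
  then show ?case by (intro exI[of _ \<alpha>']) (simp add: \<alpha>'_def)
qed

lemma rising_poly_expansion:
  fixes q :: "'a::field poly"
  assumes "q = 0 \<or> degree q < n"
  obtains \<alpha> where "q = (\<Sum>r<n. smult (\<alpha> r) (rising_poly b r))"
proof (cases n)
  case 0
  with assms that show ?thesis by auto
next
  case (Suc m)
  with assms have "degree q \<le> m" by auto
  then obtain \<alpha> where "q = (\<Sum>r\<le>m. smult (\<alpha> r) (rising_poly b r))"
    using monic_basis_expansion[of "rising_poly b" q m] by auto
  with that Suc show ?thesis by (simp add: lessThan_Suc_atMost)
qed

section \<open>Negative binomial weights\<close>

definition negbin_weight :: "real \<Rightarrow> real \<Rightarrow> nat \<Rightarrow> real" where
  "negbin_weight g c k = pochhammer g k / fact k * c ^ k"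

lemma meixner_weight_eq_negbin_weight:
  assumes "0 < b"
  shows "meixner_weight b c k = negbin_weight b c k"
proof -
  have "b \<notin> \<int>\<^sub>\<le>\<^sub>0" using assms nonpos_Ints_nonpos by fastforce
  then have "pochhammer b k = Gamma (b + real k) / Gamma b" by (simp add: pochhammer_Gamma)
  moreover have "Gamma (real k + 1) = fact k" using Gamma_fact[of k] by (simp add: add.commute)
  ultimately show ?thesis by (simp add: meixner_weight_def negbin_weight_def)
qed

lemma negbin_weight_sums:
  assumes "\<bar>c\<bar> < 1"
  shows "negbin_weight g c sums (1 - c) powr (- g)"
proof -
  have "((-g) gchoose k) * (-c) ^ k = negbin_weight g c k" for k
  proof -
    have "((-g) gchoose k) * (-c) ^ k = ((-1) ^ k * (-1) ^ k) * (pochhammer g k / fact k * c ^ k)"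
      by (simp add: gbinomial_pochhammer power_minus[of c])
    also have "(-1::real) ^ k * (-1) ^ k = 1" by (simp flip: power_add)
    finally show ?thesis by (simp add: negbin_weight_def)
  qed
  with gen_binomial_real[of "-c" "-g"] assms show ?thesis by simp
qed

lemma falling_poly_negbin_weight_sums:
  assumes "\<bar>c\<bar> < 1"
  shows "(\<lambda>k. poly (falling_poly j) (real k) * negbin_weight g c k)
           sums (pochhammer g j * c ^ j * (1 - c) powr (- (g + j)))"
proof -
  let ?f = "\<lambda>k. poly (falling_poly j) (real k) * negbin_weight g c k"
  have shift: "?f (m + j) = pochhammer g j * c ^ j * negbin_weight (g + j) c m" for m
  proof -
    have "poly (falling_poly j) (real (m + j)) = fact (m + j) / fact m"
      using poly_falling_poly_of_nat[of j m] by (simp add: field_simps)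
    moreover have "pochhammer g (m + j) = pochhammer g j * pochhammer (g + j) m"
      using pochhammer_product'[of g j m] by (simp add: add.commute)
    ultimately show ?thesis by (simp add: negbin_weight_def power_add field_simps)
  qed
  have "(\<lambda>m. ?f (m + j)) sums (pochhammer g j * c ^ j * (1 - c) powr (- (g + j)))"
    unfolding shift by (intro sums_mult negbin_weight_sums assms)
  then have "?f sums (pochhammer g j * c ^ j * (1 - c) powr (- (g + j)) + (\<Sum>k<j. ?f k))"
    by (rule iffD1[OF sums_iff_shift])
  moreover have "(\<Sum>k<j. ?f k) = 0" by (simp add: poly_falling_poly_less)
  ultimately show ?thesis by simp
qed

lemma summable_poly_negbin_weight:
  assumes "\<bar>c\<bar> < 1"
  shows "summable (\<lambda>k. poly q (real k) * negbin_weight g c k)"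
proof -
  obtain \<alpha> where \<alpha>: "q = (\<Sum>j\<le>degree q. smult (\<alpha> j) (falling_poly j))"
    using monic_basis_expansion[of falling_poly q "degree q"] by auto
  have "summable (\<lambda>k. \<Sum>j\<le>degree q. \<alpha> j * (poly (falling_poly j) (real k) * negbin_weight g c k))"
    using falling_poly_negbin_weight_sums[OF assms]
    by (intro summable_sum summable_mult) (auto simp: sums_iff)
  then show ?thesis
    by (subst \<alpha>) (simp add: poly_sum sum_distrib_right sum_distrib_left mult_ac)
qed

lemma rising_poly_negbin_weight:
  "poly (rising_poly b r) (real k) * negbin_weight b c k = pochhammer b r * negbin_weight (b + r) c k"
proof -
  have "pochhammer (real k + b) r * pochhammer b k = pochhammer b r * pochhammer (b + r) k"
    using pochhammer_product'[of b k r] pochhammer_product'[of b r k]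
    by (simp add: add.commute mult.commute)
  then show ?thesis by (simp add: poly_rising_poly negbin_weight_def)
qed

lemma falling_rising_negbin_weight_sums:
  assumes "\<bar>c\<bar> < 1"
  shows "(\<lambda>k. poly (falling_poly j) (real k) * poly (rising_poly b r) (real k) * negbin_weight b c k)
           sums (pochhammer b r * pochhammer (b + r) j * c ^ j * (1 - c) powr (- (b + r + j)))"
  using sums_mult[OF falling_poly_negbin_weight_sums[OF assms, of j "b + r"], of "pochhammer b r"]
  by (simp add: mult.assoc rising_poly_negbin_weight mult.left_commute)

section \<open>Lagrange interpolation at the nodes\<close>

lemma sum_poly_eq_coeff_of_pochhammer_moments:
  fixes s d :: "'b \<Rightarrow> 'a::field"
  assumes "\<And>j. j \<le> M \<Longrightarrow> (\<Sum>t\<in>T. d t * pochhammer (s t) j) = (if j = M then K else 0)"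
    and "degree q \<le> M"
  shows "(\<Sum>t\<in>T. d t * poly q (s t)) = K * coeff q M"
proof -
  obtain \<alpha> where \<alpha>: "q = (\<Sum>j\<le>M. smult (\<alpha> j) (rising_poly 0 j))" "\<alpha> M = coeff q M"
    using monic_basis_expansion[of "rising_poly 0" q M] assms(2) by auto
  have "(\<Sum>t\<in>T. d t * poly q (s t)) = (\<Sum>j\<le>M. \<alpha> j * (\<Sum>t\<in>T. d t * pochhammer (s t) j))"
    by (subst \<alpha>(1)) (simp add: poly_sum poly_rising_poly sum_distrib_left mult_ac sum.swap[of _ T])
  also have "\<dots> = (\<Sum>j\<le>M. \<alpha> j * (if j = M then K else 0))"
    by (intro sum.cong refl) (simp add: assms(1))
  also have "\<dots> = \<alpha> M * K" by (simp add: if_distrib sum.delta cong: if_cong)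
  finally show ?thesis using \<alpha>(2) by simp
qed

lemma weight_mult_prod_node_diffs_eq:
  fixes s d :: "'b \<Rightarrow> 'a::field"
  assumes "finite T" "card T = Suc M"
    and "\<And>j. j \<le> M \<Longrightarrow> (\<Sum>t\<in>T. d t * pochhammer (s t) j) = (if j = M then K else 0)"
    and "t\<^sub>0 \<in> T"
  shows "d t\<^sub>0 * (\<Prod>t\<in>T - {t\<^sub>0}. s t\<^sub>0 - s t) = K"
proof -
  define q where "q = (\<Prod>t\<in>T - {t\<^sub>0}. [:- s t, 1:])"
  have "card (T - {t\<^sub>0}) = M" using assms by simp
  then have "degree q = M" "coeff q M = 1"
    using lead_coeff_prod[of "\<lambda>t. [:- s t, 1:]" "T - {t\<^sub>0}"]
    by (simp_all add: q_def degree_prod_eq_sum_degree)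
  moreover have poly_q: "poly q x = (\<Prod>t\<in>T - {t\<^sub>0}. x - s t)" for x
    by (simp add: q_def poly_prod)
  moreover have "(\<Sum>t\<in>T - {t\<^sub>0}. d t * poly q (s t)) = 0"
    using assms(1) unfolding poly_q by (intro sum.neutral ballI) (auto simp: prod_zero_iff)
  ultimately show ?thesis
    using sum_poly_eq_coeff_of_pochhammer_moments[OF assms(3), of q] assms(1,4)
    by (simp add: sum.remove)
qed

section \<open>Pochhammer product identities\<close>

lemma fact_mult_pochhammer_of_nat: "fact m * pochhammer (real m + 1) r = fact (m + r)"
  using pochhammer_product'[of "1::real" m r] by (simp add: pochhammer_fact add.commute)

lemma prod_diff_of_nat_remove:
  assumes "r \<le> m"
  shows "(\<Prod>r'\<in>{..m} - {r}. real r - real r') = (-1) ^ (m - r) * fact r * fact (m - r)"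
  using assms
proof (induction m)
  case (Suc m)
  show ?case
  proof (cases "r = Suc m")
    case True
    then have "{..Suc m} - {r} = {..<r}" by auto
    moreover have "(\<Prod>r'<r. real r - real r') = (\<Prod>i<r. real (Suc i))"
      by (subst prod.nat_diff_reindex[symmetric]) (auto intro!: prod.cong simp: of_nat_diff)
    ultimately show ?thesis using True by (simp add: fact_prod_Suc atLeast0LessThan algebra_simps)
  next
    case False
    with Suc.prems have r: "r \<le> m" by simp
    have "{..Suc m} - {r} = insert (Suc m) ({..m} - {r})" using r by auto
    then have "(\<Prod>r'\<in>{..Suc m} - {r}. real r - real r')
        = (real r - real (Suc m)) * ((-1) ^ (m - r) * fact r * fact (m - r))"
      using Suc.IH r by simp
    also have "\<dots> = (-1) ^ (Suc m - r) * fact r * fact (Suc m - r)"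
      using r by (simp add: Suc_diff_le of_nat_diff algebra_simps)
    finally show ?thesis .
  qed
qed simp

lemma prod_diff_of_nat_remove_pochhammer:
  assumes "r < n"
  shows "(\<Prod>r'\<in>{..<n} - {r}. real r - real r') * pochhammer (1 - real n) r * (-1) ^ (n - 1)
           = fact (n - 1) * fact r"
proof -
  obtain m where n: "n = Suc m" using assms by (cases n) auto
  with assms have r: "r \<le> m" by simp
  have "pochhammer (1 - real n) r = (-1) ^ r * pochhammer (real (m - r) + 1) r"
    using r n by (simp add: pochhammer_minus of_nat_diff)
  then have poch: "pochhammer (1 - real n) r * fact (m - r) = (-1) ^ r * fact m"
    using fact_mult_pochhammer_of_nat[of "m - r" r] r by (simp add: mult_ac)
  have "(\<Prod>r'\<in>{..<n} - {r}. real r - real r') * pochhammer (1 - real n) r * (-1) ^ (n - 1)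
      = (-1) ^ (m - r) * fact r * (pochhammer (1 - real n) r * fact (m - r)) * (-1) ^ m"
    using prod_diff_of_nat_remove[OF r] n by (simp add: lessThan_Suc_atMost mult_ac)
  also have "\<dots> = fact m * fact r * ((-1) ^ (m - r + r + m))"
    unfolding poch by (simp add: power_add mult_ac)
  also have "(-1::real) ^ (m - r + r + m) = 1"
    using r by (simp flip: mult_2)
  finally show ?thesis using n by simp
qed

lemma prod_diff_of_nat_pochhammer:
  fixes b :: real
  shows "(\<Prod>m<n. b + real r - real m) * pochhammer (b + 1 - real n) r * (-1) ^ n
          = pochhammer (-b) n * pochhammer (b + 1) r"
proof -
  have "(\<Prod>m<n. b + real r - real m) = pochhammer (b + 1 - real n + real r) n"
    by (subst prod.nat_diff_reindex[symmetric])
      (auto intro!: prod.cong simp: pochhammer_prod atLeast0LessThan of_nat_diff)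
  moreover have "pochhammer (b + 1 - real n) r * pochhammer (b + 1 - real n + real r) n
      = pochhammer (b + 1 - real n) n * pochhammer (b + 1) r"
    using pochhammer_product'[of "b + 1 - real n" r n] pochhammer_product'[of "b + 1 - real n" n r]
    by (simp add: add.commute)
  moreover have "pochhammer (b + 1 - real n) n = (-1) ^ n * pochhammer (-b) n"
    using pochhammer_minus'[of b n] by (simp add: algebra_simps)
  moreover have "(-1::real) ^ n * (-1) ^ n = 1" by (simp flip: power_add mult_2)
  ultimately show ?thesis by (simp add: mult_ac)
qed

lemma prod_node_diffs_eq:
  fixes \<beta> :: "'c \<Rightarrow> real" and n :: "'c \<Rightarrow> nat"
  assumes "finite I" "i \<in> I" "r < n i"
  shows "(\<Prod>t\<in>Sigma I (\<lambda>k. {..<n k}) - {(i, r)}. \<beta> i + real r - (\<beta> (fst t) + real (snd t)))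
         * ((-1) ^ (sum n I - 1) * pochhammer (1 - real (n i)) r
            * (\<Prod>k\<in>I - {i}. pochhammer (\<beta> i + 1 - \<beta> k - real (n k)) r))
       = fact (n i - 1) * fact r * (\<Prod>k\<in>I - {i}. pochhammer (\<beta> k - \<beta> i) (n k))
         * (\<Prod>k\<in>I - {i}. pochhammer (\<beta> i + 1 - \<beta> k) r)"
proof -
  let ?J = "I - {i}"
  let ?d = "\<lambda>t. \<beta> i + real r - (\<beta> (fst t) + real (snd t))"
  have "Sigma I (\<lambda>k. {..<n k}) - {(i, r)} = Pair i ` ({..<n i} - {r}) \<union> Sigma ?J (\<lambda>k. {..<n k})"
    using assms(2) by auto
  then have "(\<Prod>t\<in>Sigma I (\<lambda>k. {..<n k}) - {(i, r)}. ?d t)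
      = (\<Prod>t\<in>Pair i ` ({..<n i} - {r}). ?d t) * (\<Prod>t\<in>Sigma ?J (\<lambda>k. {..<n k}). ?d t)"
    using assms(1) by (auto intro: prod.union_disjoint)
  also have "(\<Prod>t\<in>Pair i ` ({..<n i} - {r}). ?d t) = (\<Prod>r'\<in>{..<n i} - {r}. real r - real r')"
    by (simp add: prod.reindex inj_on_def)
  also have "(\<Prod>t\<in>Sigma ?J (\<lambda>k. {..<n k}). ?d t) = (\<Prod>k\<in>?J. \<Prod>m<n k. ?d (k, m))"
    using assms(1) by (simp add: prod.Sigma split_beta)
  finally have "(\<Prod>t\<in>Sigma I (\<lambda>k. {..<n k}) - {(i, r)}. ?d t)
      = (\<Prod>r'\<in>{..<n i} - {r}. real r - real r') * (\<Prod>k\<in>?J. \<Prod>m<n k. (\<beta> i - \<beta> k) + real r - real m)"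
    by (simp add: algebra_simps)
  moreover have "(\<Prod>k\<in>?J. \<Prod>m<n k. (\<beta> i - \<beta> k) + real r - real m)
      * (\<Prod>k\<in>?J. pochhammer (\<beta> i + 1 - \<beta> k - real (n k)) r) * (-1) ^ sum n ?J
      = (\<Prod>k\<in>?J. pochhammer (\<beta> k - \<beta> i) (n k)) * (\<Prod>k\<in>?J. pochhammer (\<beta> i + 1 - \<beta> k) r)"
  proof -
    have "(\<Prod>m<n k. (\<beta> i - \<beta> k) + real r - real m) * pochhammer (\<beta> i + 1 - \<beta> k - real (n k)) r
        * (-1) ^ n k = pochhammer (\<beta> k - \<beta> i) (n k) * pochhammer (\<beta> i + 1 - \<beta> k) r" for k
      using prod_diff_of_nat_pochhammer[of "\<beta> i - \<beta> k" r "n k"] by (simp add: algebra_simps)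
    then show ?thesis by (simp add: prod.distrib[symmetric] power_sum)
  qed
  moreover have "(-1::real) ^ (sum n I - 1) = (-1) ^ (n i - 1) * (-1) ^ sum n ?J"
    using assms by (simp add: sum.remove power_add[symmetric])
  ultimately show ?thesis
    using prod_diff_of_nat_remove_pochhammer[OF assms(3)] by (simp add: mult_ac)
qed

lemma pochhammer_neq_0_if_notin_Ints: "(x::real) \<notin> \<int> \<Longrightarrow> pochhammer x n \<noteq> 0"
  by (auto simp: pochhammer_eq_0_iff)

section \<open>The explicit formula as a rising factorial expansion\<close>

lemma hypergeomF_minus_of_nat:
  "hypergeomF (- real m # as) bs z
     = (\<Sum>l\<le>m. (\<Prod>a\<leftarrow>- real m # as. pochhammer a l) / (\<Prod>b\<leftarrow>bs. pochhammer b l) * z ^ l / fact l)"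
  unfolding hypergeomF_def
  by (rule suminf_finite) (auto simp: pochhammer_of_nat_eq_0_iff)

definition meixner2_coeff :: "nat \<Rightarrow> (nat \<Rightarrow> real) \<Rightarrow> real \<Rightarrow> (nat \<Rightarrow> nat) \<Rightarrow> nat \<Rightarrow> nat \<Rightarrow> real" where
  "meixner2_coeff p \<beta> c n i r =
     (let N = mindex_size p n; J = {1..p} - {i} in
      (-1) ^ (N - 1) * (1 - c) powr (\<beta> i + real N - 1)
      / (c ^ (N - 1) * fact (n i - 1) * (\<Prod>k\<in>J. pochhammer (\<beta> k - \<beta> i) (n k)))
      * (pochhammer (1 - real (n i)) r * (\<Prod>k\<in>J. pochhammer (\<beta> i + 1 - \<beta> k - real (n k)) r)
         / ((\<Prod>k\<in>J. pochhammer (\<beta> i + 1 - \<beta> k) r) * pochhammer (\<beta> i) r) * (1 - c) ^ r / fact r))"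

lemma meixner2_typeI_eq_sum:
  assumes "i \<in> {1..p}" "1 \<le> n i"
  shows "meixner2_typeI p \<beta> c n i x = (\<Sum>r<n i. meixner2_coeff p \<beta> c n i r * pochhammer (x + \<beta> i) r)"
proof -
  define ks where "ks = filter (\<lambda>k. k \<noteq> i) [1..<p+1]"
  have ks: "distinct ks" "set ks = {1..p} - {i}" by (auto simp: ks_def)
  have neg: "1 - real (n i) = - real (n i - 1)" and "{..n i - 1} = {..<n i}"
    using assms(2) by auto
  then show ?thesis
    unfolding meixner2_typeI_def meixner2_coeff_def Let_def ks_def[symmetric] neg
    by (simp add: hypergeomF_minus_of_nat sum_distrib_left o_def ks
        prod.distinct_set_conv_list[symmetric] field_simps)
qed

section \<open>Type I polynomials\<close>

locale meixner_typeI =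
  fixes p :: nat and \<beta> :: "nat \<Rightarrow> real" and c :: real and n :: "nat \<Rightarrow> nat"
    and A :: "nat \<Rightarrow> real poly"
  assumes c_pos: "0 < c" and c_less_1: "c < 1"
    and beta_pos: "\<And>k. k \<in> {1..p} \<Longrightarrow> 0 < \<beta> k"
    and beta_diff_notin_Ints: "\<And>k l. k \<in> {1..p} \<Longrightarrow> l \<in> {1..p} \<Longrightarrow> k \<noteq> l \<Longrightarrow> \<beta> k - \<beta> l \<notin> \<int>"
    and typeI: "is_typeI p \<beta> c n A"
begin

abbreviation N :: nat where "N \<equiv> mindex_size p n"

lemma abs_c_less_1: "\<bar>c\<bar> < 1"
  using c_pos c_less_1 by simp

text \<open>The only use of the non-integrality of the differences \<beta> k - \<beta> l.\<close>

lemma pochhammer_beta_diff_neq_0: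
  assumes "i \<in> {1..p}" "k \<in> {1..p} - {i}"
  shows "pochhammer (\<beta> k - \<beta> i) m \<noteq> 0" "pochhammer (\<beta> i + 1 - \<beta> k) m \<noteq> 0"
proof -
  have k: "k \<in> {1..p}" "k \<noteq> i" using assms(2) by auto
  have ki: "\<beta> k - \<beta> i \<notin> \<int>" by (rule beta_diff_notin_Ints[OF k(1) assms(1) k(2)])
  have ik: "\<beta> i - \<beta> k \<notin> \<int>" by (rule beta_diff_notin_Ints[OF assms(1) k(1) k(2)[symmetric]])
  have "\<beta> i + 1 - \<beta> k \<notin> \<int>"
  proof
    assume "\<beta> i + 1 - \<beta> k \<in> \<int>"
    then have "\<beta> i + 1 - \<beta> k - 1 \<in> \<int>" by (rule Ints_diff[OF _ Ints_1])
    with ik show False by simp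
  qed
  with ki show "pochhammer (\<beta> k - \<beta> i) m \<noteq> 0" "pochhammer (\<beta> i + 1 - \<beta> k) m \<noteq> 0"
    by (simp_all add: pochhammer_neq_0_if_notin_Ints)
qed

lemma A_eq_0_or_degree_less:
  assumes "k \<in> {1..p}"
  shows "A k = 0 \<or> degree (A k) < n k"
proof -
  have "(n k = 0 \<longrightarrow> A k = 0) \<and> (0 < n k \<longrightarrow> degree (A k) \<le> n k - 1)"
    using typeI assms by (simp add: is_typeI_def)
  then show ?thesis by (cases "n k") auto
qed

lemma A_rising_poly_expansion:
  obtains a where "\<And>k. k \<in> {1..p} \<Longrightarrow> A k = (\<Sum>r<n k. smult (a k r) (rising_poly (\<beta> k) r))"
proof -
  have "\<forall>k\<in>{1..p}. \<exists>\<alpha>. A k = (\<Sum>r<n k. smult (\<alpha> r) (rising_poly (\<beta> k) r))"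
    using A_eq_0_or_degree_less rising_poly_expansion by metis
  with that show ?thesis by metis
qed

lemma summable_poly_A_negbin_weight:
  "summable (\<lambda>x. poly q (real x) * poly (A k) (real x) * negbin_weight (\<beta> k) c x)"
  using summable_poly_negbin_weight[OF abs_c_less_1, of "q * A k"] by (simp add: mult.assoc)

lemma monomial_moments:
  assumes "m < N"
  shows "(\<Sum>k\<in>{1..p}. \<Sum>x. real x ^ m * poly (A k) (real x) * negbin_weight (\<beta> k) c x)
           = (if m = N - 1 then 1 else 0)"
proof -
  have "(\<Sum>k\<in>{1..p}. \<Sum>x. real x ^ m * poly (A k) (real x) * negbin_weight (\<beta> k) c x)
      = (\<Sum>k\<in>{1..p}. \<Sum>x. real x ^ m * poly (A k) (real x) * meixner_weight (\<beta> k) c x)"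
    by (intro sum.cong refl arg_cong[where f = suminf] ext)
      (simp add: meixner_weight_eq_negbin_weight beta_pos)
  then show ?thesis using typeI assms by (simp add: is_typeI_def)
qed

lemma sum_poly_moments:
  assumes "degree q < N"
  shows "(\<Sum>k\<in>{1..p}. \<Sum>x. poly q (real x) * poly (A k) (real x) * negbin_weight (\<beta> k) c x)
           = coeff q (N - 1)"
proof -
  have expand: "(\<Sum>x. poly q (real x) * poly (A k) (real x) * negbin_weight (\<beta> k) c x)
      = (\<Sum>m\<le>degree q. coeff q m * (\<Sum>x. real x ^ m * poly (A k) (real x) * negbin_weight (\<beta> k) c x))"
    for k
  proof -
    have summable: "summable (\<lambda>x. real x ^ m * poly (A k) (real x) * negbin_weight (\<beta> k) c x)" for m
      using summable_poly_A_negbin_weight[of "monom 1 m" k] by (simp add: poly_monom)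
    have "(\<lambda>x. poly q (real x) * poly (A k) (real x) * negbin_weight (\<beta> k) c x)
        = (\<lambda>x. \<Sum>m\<le>degree q. coeff q m * (real x ^ m * poly (A k) (real x) * negbin_weight (\<beta> k) c x))"
      by (simp add: poly_altdef[of q] sum_distrib_left sum_distrib_right mult_ac)
    then show ?thesis
      using summable by (simp add: suminf_sum summable_mult suminf_mult)
  qed
  have "(\<Sum>k\<in>{1..p}. \<Sum>x. poly q (real x) * poly (A k) (real x) * negbin_weight (\<beta> k) c x)
      = (\<Sum>k\<in>{1..p}. \<Sum>m\<le>degree q. coeff q m
           * (\<Sum>x. real x ^ m * poly (A k) (real x) * negbin_weight (\<beta> k) c x))"
    unfolding expand ..
  also have "\<dots> = (\<Sum>m\<le>degree q. coeff q m
           * (\<Sum>k\<in>{1..p}. \<Sum>x. real x ^ m * poly (A k) (real x) * negbin_weight (\<beta> k) c x))"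
    by (simp add: sum_distrib_left) (rule sum.swap)
  also have "\<dots> = (\<Sum>m\<le>degree q. coeff q m * (if m = N - 1 then 1 else 0))"
    using assms by (intro sum.cong refl arg_cong2[where f = "(*)"] monomial_moments) auto
  also have "\<dots> = coeff q (N - 1)"
    using assms by (auto simp: if_distrib sum.delta coeff_eq_0 cong: if_cong)
  finally show ?thesis .
qed

end

locale meixner_typeI_expansion = meixner_typeI +
  fixes a :: "nat \<Rightarrow> nat \<Rightarrow> real"
  assumes A_expansion: "\<And>k. k \<in> {1..p} \<Longrightarrow> A k = (\<Sum>r<n k. smult (a k r) (rising_poly (\<beta> k) r))"
begin

definition node_weight :: "nat \<Rightarrow> nat \<Rightarrow> real" where
  "node_weight k r = a k r * pochhammer (\<beta> k) r * (1 - c) powr (- (\<beta> k + r))"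

lemma falling_poly_moment_sums:
  assumes "k \<in> {1..p}"
  shows "(\<lambda>x. poly (falling_poly j) (real x) * poly (A k) (real x) * negbin_weight (\<beta> k) c x)
           sums ((c / (1 - c)) ^ j * (\<Sum>r<n k. node_weight k r * pochhammer (\<beta> k + r) j))"
proof -
  have "(1 - c) powr (- (\<beta> k + r + j)) = (1 - c) powr (- (\<beta> k + r) + - real j)" for r
    by (simp add: algebra_simps)
  also have "\<dots> r = (1 - c) powr (- (\<beta> k + r)) / (1 - c) ^ j" for r
    using c_less_1 by (subst powr_add) (simp add: powr_minus powr_realpow divide_inverse)
  finally have summand: "a k r * (pochhammer (\<beta> k) r * pochhammer (\<beta> k + r) j * c ^ j
        * (1 - c) powr (- (\<beta> k + r + j))) = (c / (1 - c)) ^ j * (node_weight k r * pochhammer (\<beta> k + r) j)" for r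
    by (simp add: node_weight_def power_divide)
  have "(\<lambda>x. \<Sum>r<n k. a k r * (poly (falling_poly j) (real x) * poly (rising_poly (\<beta> k) r) (real x)
          * negbin_weight (\<beta> k) c x))
      sums (\<Sum>r<n k. (c / (1 - c)) ^ j * (node_weight k r * pochhammer (\<beta> k + r) j))"
    unfolding summand[symmetric]
    by (intro sums_sum sums_mult falling_rising_negbin_weight_sums abs_c_less_1)
  then show ?thesis
    using A_expansion[OF assms]
    by (simp add: poly_sum sum_distrib_left sum_distrib_right mult_ac)
qed

lemma node_weight_moments:
  assumes "j < N"
  shows "(\<Sum>k\<in>{1..p}. \<Sum>r<n k. node_weight k r * pochhammer (\<beta> k + r) j)
           = (if j = N - 1 then ((1 - c) / c) ^ (N - 1) else 0)"
proof -
  have "(c / (1 - c)) ^ j * (\<Sum>k\<in>{1..p}. \<Sum>r<n k. node_weight k r * pochhammer (\<beta> k + r) j)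
      = (\<Sum>k\<in>{1..p}. \<Sum>x. poly (falling_poly j) (real x) * poly (A k) (real x)
           * negbin_weight (\<beta> k) c x)"
    by (subst sum_distrib_left) (intro sum.cong refl sums_unique falling_poly_moment_sums)
  also have "\<dots> = coeff (falling_poly j) (N - 1)"
    using assms by (intro sum_poly_moments) simp
  also have "\<dots> = (if j = N - 1 then 1 else 0)"
    using assms by (auto simp: coeff_eq_0)
  finally show ?thesis
    using c_pos c_less_1 by (auto simp: field_simps power_divide)
qed

lemma node_weight_mult_prod_node_diffs:
  assumes "i \<in> {1..p}" "r < n i"
  shows "node_weight i r
           * (\<Prod>t\<in>Sigma {1..p} (\<lambda>k. {..<n k}) - {(i, r)}. \<beta> i + real r - (\<beta> (fst t) + real (snd t)))
         = ((1 - c) / c) ^ (N - 1)"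
proof -
  let ?T = "Sigma {1..p} (\<lambda>k. {..<n k})"
  have "N = card ?T" by (simp add: mindex_size_def)
  moreover have "n i \<le> N"
    unfolding mindex_size_def using assms(1) by (intro member_le_sum) auto
  ultimately have "card ?T = Suc (N - 1)" using assms(2) by simp
  moreover have "(\<Sum>t\<in>?T. node_weight (fst t) (snd t) * pochhammer (\<beta> (fst t) + real (snd t)) j)
      = (if j = N - 1 then ((1 - c) / c) ^ (N - 1) else 0)" if "j \<le> N - 1" for j
  proof -
    have "(\<Sum>t\<in>?T. node_weight (fst t) (snd t) * pochhammer (\<beta> (fst t) + real (snd t)) j)
        = (\<Sum>k\<in>{1..p}. \<Sum>r<n k. node_weight k r * pochhammer (\<beta> k + real r) j)"
      by (subst sum.Sigma) (auto simp: split_beta)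
    then show ?thesis
      using node_weight_moments[of j] that \<open>card ?T = Suc (N - 1)\<close> \<open>N = card ?T\<close> by simp
  qed
  ultimately show ?thesis
    using weight_mult_prod_node_diffs_eq[where T = ?T and M = "N - 1" and t\<^sub>0 = "(i, r)"
        and d = "\<lambda>t. node_weight (fst t) (snd t)" and s = "\<lambda>t. \<beta> (fst t) + real (snd t)"] assms
    by simp
qed

lemma a_eq_meixner2_coeff:
  assumes i: "i \<in> {1..p}" and r: "r < n i"
  shows "a i r = meixner2_coeff p \<beta> c n i r"
proof -
  define J where "J = {1..p} - {i}"
  define G where "G = (\<Prod>t\<in>Sigma {1..p} (\<lambda>k. {..<n k}) - {(i, r)}.
    \<beta> i + real r - (\<beta> (fst t) + real (snd t)))"
  define P where "P = pochhammer (1 - real (n i)) r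
    * (\<Prod>k\<in>J. pochhammer (\<beta> i + 1 - \<beta> k - real (n k)) r)"
  define Q where "Q = (\<Prod>k\<in>J. pochhammer (\<beta> k - \<beta> i) (n k))"
  define S where "S = (\<Prod>k\<in>J. pochhammer (\<beta> i + 1 - \<beta> k) r)"
  have "Q \<noteq> 0" "S \<noteq> 0"
    using pochhammer_beta_diff_neq_0 i by (auto simp: Q_def S_def J_def)
  have poch: "pochhammer (\<beta> i) r \<noteq> 0"
    using beta_pos[OF i] by (auto simp: pochhammer_eq_0_iff)
  have nodes: "G * ((-1) ^ (N - 1) * P) = fact (n i - 1) * fact r * Q * S"
    using prod_node_diffs_eq[where I = "{1..p}" and \<beta> = \<beta> and n = n] i r
    by (simp add: G_def P_def Q_def S_def J_def mindex_size_def mult_ac)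
  have "node_weight i r * G = ((1 - c) / c) ^ (N - 1)"
    unfolding G_def by (rule node_weight_mult_prod_node_diffs[OF i r])
  then have "node_weight i r * (fact (n i - 1) * fact r * Q * S)
      = ((1 - c) / c) ^ (N - 1) * ((-1) ^ (N - 1) * P)"
    unfolding nodes[symmetric] by (simp add: mult_ac)
  then have weight: "node_weight i r
      = ((1 - c) / c) ^ (N - 1) * ((-1) ^ (N - 1) * P) / (fact (n i - 1) * fact r * Q * S)"
    using \<open>Q \<noteq> 0\<close> \<open>S \<noteq> 0\<close> by (simp add: eq_divide_eq)
  have "n i \<le> N"
    unfolding mindex_size_def using i by (intro member_le_sum) auto
  with r have "\<beta> i + real N - 1 = \<beta> i + real (N - 1)" by (simp add: of_nat_diff)
  then have "(1 - c) powr (\<beta> i + real N - 1) = (1 - c) powr \<beta> i * (1 - c) ^ (N - 1)"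
    using c_less_1 by (simp only: powr_add powr_realpow)
  moreover have "(1 - c) powr (\<beta> i + r) = (1 - c) powr \<beta> i * (1 - c) ^ r"
    using c_less_1 by (simp add: powr_add powr_realpow)
  moreover have "a i r = node_weight i r * (1 - c) powr (\<beta> i + r) / pochhammer (\<beta> i) r"
    using c_less_1 poch unfolding node_weight_def powr_minus by (simp add: field_simps)
  ultimately show ?thesis
    using c_pos c_less_1 poch \<open>Q \<noteq> 0\<close> \<open>S \<noteq> 0\<close>
    by (simp add: weight meixner2_coeff_def Let_def P_def Q_def S_def J_def field_simps power_divide)
qed

end

theorem mainTheorem5:
  fixes p :: nat and \<beta> :: "nat \<Rightarrow> real" and c :: real and n :: "nat \<Rightarrow> nat"
    and i :: nat and A :: "nat \<Rightarrow> real poly"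
  assumes "0 < c" "c < 1"
    and "\<And>k. k \<in> {1..p} \<Longrightarrow> 0 < \<beta> k"
    and "\<And>k l. k \<in> {1..p} \<Longrightarrow> l \<in> {1..p} \<Longrightarrow> k \<noteq> l \<Longrightarrow> \<beta> k - \<beta> l \<notin> \<int>"
    and "i \<in> {1..p}" "1 \<le> n i"
    and "is_typeI p \<beta> c n A"
  shows "\<forall>x::real. poly (A i) x = meixner2_typeI p \<beta> c n i x"
proof
  fix x :: real
  interpret meixner_typeI p \<beta> c n A
    using assms by unfold_locales auto
  obtain a where "\<And>k. k \<in> {1..p} \<Longrightarrow> A k = (\<Sum>r<n k. smult (a k r) (rising_poly (\<beta> k) r))"
    using A_rising_poly_expansion by blast
  then interpret meixner_typeI_expansion p \<beta> c n A a
    by unfold_locales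
  have "poly (A i) x = (\<Sum>r<n i. a i r * pochhammer (x + \<beta> i) r)"
    using A_expansion[OF assms(5)] by (simp add: poly_sum poly_rising_poly)
  also have "\<dots> = meixner2_typeI p \<beta> c n i x"
    using assms(5,6) by (simp add: meixner2_typeI_eq_sum a_eq_meixner2_coeff)
  finally show "poly (A i) x = meixner2_typeI p \<beta> c n i x" .
qed

end
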